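(* Let $\Phi_1,\Phi_2$ be Young functions and $u:\mathbb{R}^n\to(0,\infty)$. Then the following statements are equivalent: (1) $\Phi_1 \prec \Phi_2$, i.e. there is a constant $C>0$ with $\Phi_1(t) \le \Phi_2(Ct)$ for all $t>0$; (2) $wL_{\Phi_2}^u(\mathbb{R}^n) \subseteq wL_{\Phi_1}^u(\mathbb{R}^n)$; (3) there is a constant $C>0$ such that $\|f\|_{wL_{\Phi_1}^u(\mathbb{R}^n)} \le C\|f\|_{wL_{\Phi_2}^u(\mathbb{R}^n)}$ for every $f\in wL_{\Phi_2}^u(\mathbb{R}^n)$.
   Context: A Young function is a function $\Phi:[0,\infty)\to[0,\infty)$ that is convex, left-continuous, satisfies $\lim_{t\to0}\Phi(t)=0=\Phi(0)$ and $\lim_{t\to\infty}\Phi(t)=\infty$. For a Young function $\Phi$ and a weight $u:\mathbb{R}^n\to(0,\infty)$, the weighted weak Orlicz space $wL_\Phi^u(\mathbb{R}^n)$ is the set of measurable $f:\mathbb{R}^n\to\mathbb{R}$ with $\|f\|_{wL_\Phi^u(\mathbb{R}^n)} := \inf\{ b>0 : \sup_{t>0} \Phi(t)\,|\{x\in\mathbb{R}^n : |u(x)f(x)|/b > t\}| \le 1\} < \infty$, where $|\cdot|$ is Lebesgue measure. *)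

theory Defs
  imports "HOL-Analysis.Analysis"
begin

text \<open>Young function, viewed on [0,infinity) (values on negative reals are irrelevant).\<close>
definition young_function :: "(real \<Rightarrow> real) \<Rightarrow> bool" where
  "young_function \<Phi> \<longleftrightarrow>
     (\<forall>t\<ge>0. 0 \<le> \<Phi> t) \<and>
     convex_on {0..} \<Phi> \<and>
     (\<forall>t>0. continuous (at_left t) \<Phi>) \<and>
     \<Phi> 0 = 0 \<and> (\<Phi> \<longlongrightarrow> 0) (at_right 0) \<and>
     filterlim \<Phi> at_top at_top"

text \<open>The weak Orlicz (quasi)norm, with value infinity when no admissible b exists.\<close>
definition wOrlicz_norm ::
  "(real \<Rightarrow> real) \<Rightarrow> ('a::euclidean_space \<Rightarrow> real) \<Rightarrow> ('a \<Rightarrow> real) \<Rightarrow> ennreal" where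
  "wOrlicz_norm \<Phi> u f = Inf {ennreal b | b. b > 0 \<and>
      (\<forall>t>0. ennreal (\<Phi> t) * emeasure lebesgue {x. \<bar>u x * f x\<bar> / b > t} \<le> 1)}"

definition wOrlicz_space ::
  "(real \<Rightarrow> real) \<Rightarrow> ('a::euclidean_space \<Rightarrow> real) \<Rightarrow> ('a \<Rightarrow> real) set" where
  "wOrlicz_space \<Phi> u = {f. f \<in> borel_measurable lebesgue \<and> wOrlicz_norm \<Phi> u f < \<infinity>}"

end

theory Submission
  imports Defs
begin

(*
  If \<Phi>1 t \<le> \<Phi>2 (C t), every b admissible in the infimum defining the \<Phi>2-quasinorm
  of f makes C b admissible for \<Phi>1; this gives the norm inequality, which in turn gives
  the inclusion. Conversely, if \<Phi>1 is not dominated, choose T_k > 0 with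
  \<Phi>2 ((k+1) 2^(k+2) T_k) < \<Phi>1 T_k and let u f take the value (k+1) T_k on disjoint
  sets E_k of measure 2 / \<Phi>1 T_k. Convexity through the origin gives
  \<Phi>2 t |E_k| \<le> 2^-(k+1) for t < (k+1) T_k, so b = 1 is admissible for \<Phi>2 by a
  geometric series, whereas for \<Phi>1 and any b, a level k > b gives \<Phi>1 T_k |E_k| = 2 > 1.
*)

lemma young_function_nonneg:
  "young_function \<Phi> \<Longrightarrow> 0 \<le> t \<Longrightarrow> 0 \<le> \<Phi> t"
  unfolding young_function_def by blast

lemma young_function_le_scaled:
  assumes "young_function \<Phi>" "0 \<le> l" "l \<le> 1" "0 \<le> s"
  shows "\<Phi> (l * s) \<le> l * \<Phi> s"
proof -
  have cv: "convex_on {0..} \<Phi>" and z: "\<Phi> 0 = 0"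
    using assms unfolding young_function_def by auto
  have "\<Phi> ((1 - l) *\<^sub>R 0 + l *\<^sub>R s) \<le> (1 - l) * \<Phi> 0 + l * \<Phi> s"
    by (rule convex_onD[OF cv]) (use assms in auto)
  thus ?thesis using z by simp
qed

lemma young_function_mono:
  assumes "young_function \<Phi>" "0 \<le> x" "x \<le> y"
  shows "\<Phi> x \<le> \<Phi> y"
proof (cases "y = 0")
  case True
  thus ?thesis using assms by simp
next
  case False
  hence "\<Phi> ((x / y) * y) \<le> (x / y) * \<Phi> y"
    using assms by (intro young_function_le_scaled) auto
  also have "\<dots> \<le> \<Phi> y"
    using assms False young_function_nonneg[OF assms(1), of y]
    by (intro mult_left_le_one_le) auto
  finally show ?thesis using False by simp
qed

definition wOrlicz_admissible :: "(real \<Rightarrow> real) \<Rightarrow> ('a::euclidean_space \<Rightarrow> real) \<Rightarrow> real \<Rightarrow> bool" where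
  "wOrlicz_admissible \<Phi> h b \<longleftrightarrow>
     b > 0 \<and> (\<forall>t>0. ennreal (\<Phi> t) * emeasure lebesgue {x. \<bar>h x\<bar> / b > t} \<le> 1)"

lemma wOrlicz_norm_eq_Inf_admissible:
  "wOrlicz_norm \<Phi> u f = Inf (ennreal ` Collect (wOrlicz_admissible \<Phi> (\<lambda>x. u x * f x)))"
  unfolding wOrlicz_norm_def wOrlicz_admissible_def by (rule arg_cong[where f = Inf]) blast

lemma wOrlicz_norm_le_admissible:
  "wOrlicz_admissible \<Phi> (\<lambda>x. u x * f x) b \<Longrightarrow> wOrlicz_norm \<Phi> u f \<le> ennreal b"
  unfolding wOrlicz_norm_eq_Inf_admissible by (rule Inf_lower) simp

lemma wOrlicz_norm_eq_top_iff:
  "wOrlicz_norm \<Phi> u f = \<infinity> \<longleftrightarrow> \<not> (\<exists>b. wOrlicz_admissible \<Phi> (\<lambda>x. u x * f x) b)"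
  unfolding wOrlicz_norm_eq_Inf_admissible by (simp add: Inf_top_conv)

lemma wOrlicz_admissible_dominated:
  assumes "C > 0" "\<forall>t>0. \<Phi>1 t \<le> \<Phi>2 (C * t)" "wOrlicz_admissible \<Phi>2 h b"
  shows "wOrlicz_admissible \<Phi>1 h (C * b)"
  unfolding wOrlicz_admissible_def
proof (intro conjI allI impI)
  show "C * b > 0" using assms by (simp add: wOrlicz_admissible_def)
next
  fix t :: real assume t: "t > 0"
  have level: "{x. \<bar>h x\<bar> / (C * b) > t} = {x. \<bar>h x\<bar> / b > C * t}"
    using assms by (auto simp: wOrlicz_admissible_def field_simps)
  have "ennreal (\<Phi>1 t) * emeasure lebesgue {x. \<bar>h x\<bar> / b > C * t}
      \<le> ennreal (\<Phi>2 (C * t)) * emeasure lebesgue {x. \<bar>h x\<bar> / b > C * t}"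
    using assms t by (intro mult_right_mono ennreal_leI) auto
  also have "\<dots> \<le> 1"
    using assms t by (simp add: wOrlicz_admissible_def)
  finally show "ennreal (\<Phi>1 t) * emeasure lebesgue {x. \<bar>h x\<bar> / (C * b) > t} \<le> 1"
    by (simp only: level)
qed

lemma wOrlicz_norm_le_dominated:
  assumes C: "C > 0" "\<forall>t>0. \<Phi>1 t \<le> \<Phi>2 (C * t)"
  shows "wOrlicz_norm \<Phi>1 u f \<le> ennreal C * wOrlicz_norm \<Phi>2 u f"
proof -
  have "wOrlicz_norm \<Phi>1 u f / ennreal C \<le> wOrlicz_norm \<Phi>2 u f"
    unfolding wOrlicz_norm_eq_Inf_admissible[of \<Phi>2]
  proof (rule Inf_greatest, clarify)
    fix b assume b: "wOrlicz_admissible \<Phi>2 (\<lambda>x. u x * f x) b"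
    hence "wOrlicz_norm \<Phi>1 u f \<le> ennreal C * ennreal b"
      using wOrlicz_norm_le_admissible[OF wOrlicz_admissible_dominated[OF C b]] C
      by (simp add: wOrlicz_admissible_def ennreal_mult)
    thus "wOrlicz_norm \<Phi>1 u f / ennreal C \<le> ennreal b"
      using C by (intro divide_le_posI_ennreal) (auto simp: mult.commute)
  qed
  hence "ennreal C * (wOrlicz_norm \<Phi>1 u f / ennreal C) \<le> ennreal C * wOrlicz_norm \<Phi>2 u f"
    by (rule mult_left_mono) simp
  thus ?thesis
    using C mult_divide_eq_ennreal[of "ennreal C" "wOrlicz_norm \<Phi>1 u f"]
    by (simp add: ennreal_times_divide mult.commute)
qed

lemma lebesgue_disjoint_family_with_measures:
  fixes m :: "nat \<Rightarrow> real"
  assumes m: "\<And>k. 0 \<le> m k"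
  obtains E :: "nat \<Rightarrow> 'a::euclidean_space set"
  where "disjoint_family E" "\<And>k. E k \<in> sets lebesgue" "\<And>k. emeasure lebesgue (E k) = m k"
proof
  define l where "l k = root DIM('a) (m k)" for k
  define c where "c k = (\<Sum>j<k. l j)" for k
  define E where "E k = box (c k *\<^sub>R (One::'a)) ((c k + l k) *\<^sub>R One)" for k
  have l: "0 \<le> l k" for k
    using m by (simp add: l_def)
  have c_mono: "c k + l k \<le> c j" if "k < j" for k j
  proof -
    have "c k + l k = (\<Sum>i<Suc k. l i)" by (simp add: c_def)
    also have "\<dots> \<le> c j"
      unfolding c_def by (rule sum_mono2) (use that l in auto)
    finally show ?thesis .
  qed
  obtain b0 :: 'a where b0: "b0 \<in> Basis"
    using nonempty_Basis by blast
  have E_coord: "c k < x \<bullet> b0 \<and> x \<bullet> b0 < c k + l k" if "x \<in> E k" for x k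
    using that b0 by (auto simp: E_def mem_box)
  show "disjoint_family E"
    unfolding disjoint_family_on_def
  proof (intro ballI impI)
    fix k j :: nat assume "k \<noteq> j"
    hence "k < j \<or> j < k" by arith
    thus "E k \<inter> E j = {}"
      using E_coord c_mono by (smt (verit) disjoint_iff)
  qed
  show "E k \<in> sets lebesgue" for k
    by (simp add: E_def)
  show "emeasure lebesgue (E k) = m k" for k
  proof -
    have "emeasure lebesgue (E k) = emeasure lborel (E k)"
      by (simp add: E_def emeasure_completion)
    also have "\<dots> = ennreal (\<Prod>b\<in>(Basis::'a set). l k)"
      unfolding E_def using l[of k]
      by (subst emeasure_lborel_box) (auto simp: algebra_simps inner_diff_left)
    also have "(\<Prod>b\<in>(Basis::'a set). l k) = m k"
      using m[of k] by (simp add: l_def)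
    finally show ?thesis .
  qed
qed

lemma suminf_cmult_indicator_real:
  fixes s :: "nat \<Rightarrow> real"
  assumes "disjoint_family E" "x \<in> E k"
  shows "(\<Sum>j. s j * indicator (E j) x) = s k"
proof -
  have "(\<Sum>j. s j * indicator (E j) x) = (\<Sum>j\<in>{k}. s j * indicator (E j) x)"
    by (rule suminf_finite)
      (use assms in \<open>auto simp: disjoint_family_on_def split: split_indicator\<close>)
  thus ?thesis using assms(2) by simp
qed

lemma step_function_superlevel_set:
  fixes s :: "nat \<Rightarrow> real"
  assumes "disjoint_family E" "0 \<le> t"
  shows "{x. t < (\<Sum>k. s k * indicator (E k) x)} = (\<Union>k\<in>{k. t < s k}. E k)"
proof -
  have "t < (\<Sum>k. s k * indicator (E k) x) \<longleftrightarrow> (\<exists>k. t < s k \<and> x \<in> E k)" for x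
  proof (cases "\<exists>k. x \<in> E k")
    case True
    then obtain k where k: "x \<in> E k" by blast
    hence "x \<in> E j \<longleftrightarrow> j = k" for j
      using assms(1) by (auto simp: disjoint_family_on_def)
    thus ?thesis using suminf_cmult_indicator_real[OF assms(1) k] k by auto
  qed (use assms(2) in auto)
  thus ?thesis by auto
qed

lemma emeasure_step_function_superlevel_set:
  fixes s :: "nat \<Rightarrow> real"
  assumes "disjoint_family E" "\<And>k. E k \<in> sets lebesgue" "0 \<le> t"
  shows "emeasure lebesgue {x. t < (\<Sum>k. s k * indicator (E k) x)}
           = (\<Sum>k. if t < s k then emeasure lebesgue (E k) else 0)"
proof -
  define A where "A k = (if t < s k then E k else {})" for k
  have "disjoint_family A"
    using assms(1) by (auto simp: A_def disjoint_family_on_def)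
  moreover have "range A \<subseteq> sets lebesgue"
    using assms(2) by (auto simp: A_def)
  moreover have "{x. t < (\<Sum>k. s k * indicator (E k) x)} = (\<Union>k. A k)"
    using step_function_superlevel_set[OF assms(1,3)] by (auto simp: A_def)
  moreover have "emeasure lebesgue (A k) = (if t < s k then emeasure lebesgue (E k) else 0)" for k
    by (simp add: A_def)
  ultimately show ?thesis
    using suminf_emeasure[of A lebesgue] by simp
qed

lemma step_function_nonneg:
  fixes s :: "nat \<Rightarrow> real"
  assumes "disjoint_family E" "\<And>k. 0 \<le> s k"
  shows "0 \<le> (\<Sum>k. s k * indicator (E k) x)"
proof (cases "\<exists>k. x \<in> E k")
  case True
  then obtain k where "x \<in> E k" by blast
  thus ?thesis using suminf_cmult_indicator_real[OF assms(1)] assms(2) by simp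
qed simp

lemma borel_measurable_step_function:
  fixes s :: "nat \<Rightarrow> real"
  assumes "\<And>k. E k \<in> sets M"
  shows "(\<lambda>x. \<Sum>k. s k * indicator (E k) x) \<in> borel_measurable M"
  by (intro borel_measurable_suminf borel_measurable_times borel_measurable_const
      borel_measurable_indicator assms)

lemma wOrlicz_admissible_step_function:
  fixes s m :: "nat \<Rightarrow> real"
  assumes E: "disjoint_family E" "\<And>k. E k \<in> sets lebesgue" "\<And>k. emeasure lebesgue (E k) = m k"
    and nonneg: "\<And>k. 0 \<le> s k" "\<And>k. 0 \<le> m k" "\<And>t. 0 < t \<Longrightarrow> 0 \<le> \<Phi> t"
    and small: "\<And>k t. 0 < t \<Longrightarrow> t < s k \<Longrightarrow> \<Phi> t * m k \<le> (1/2) ^ Suc k"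
  shows "wOrlicz_admissible \<Phi> (\<lambda>x. \<Sum>k. s k * indicator (E k) x) 1"
  unfolding wOrlicz_admissible_def
proof (intro conjI allI impI)
  fix t :: real assume t: "0 < t"
  have "{x. \<bar>\<Sum>k. s k * indicator (E k) x\<bar> / 1 > t} = {x. t < (\<Sum>k. s k * indicator (E k) x)}"
    using step_function_nonneg[OF E(1) nonneg(1)] by simp
  hence "ennreal (\<Phi> t) * emeasure lebesgue {x. \<bar>\<Sum>k. s k * indicator (E k) x\<bar> / 1 > t}
      = ennreal (\<Phi> t) * (\<Sum>k. if t < s k then ennreal (m k) else 0)"
    using emeasure_step_function_superlevel_set[OF E(1,2), of t s] t by (simp only: E(3))
  also have "\<dots> = (\<Sum>k. ennreal (\<Phi> t) * (if t < s k then ennreal (m k) else 0))"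
    by (simp add: ennreal_suminf_cmult)
  also have "\<dots> \<le> (\<Sum>k. ennreal ((1/2) ^ Suc k))"
  proof (intro suminf_le allI)
    fix k
    show "ennreal (\<Phi> t) * (if t < s k then ennreal (m k) else 0) \<le> ennreal ((1/2) ^ Suc k)"
      using small[OF t, of k] nonneg t by (auto simp flip: ennreal_mult intro: ennreal_leI)
  qed auto
  also have "\<dots> = ennreal 1"
    by (rule suminf_ennreal_eq) (use power_half_series in auto)
  finally show "ennreal (\<Phi> t) * emeasure lebesgue {x. \<bar>\<Sum>k. s k * indicator (E k) x\<bar> / 1 > t} \<le> 1"
    by simp
qed simp

lemma not_wOrlicz_admissible_step_function:
  fixes s m T :: "nat \<Rightarrow> real"
  assumes E: "disjoint_family E" "\<And>k. E k \<in> sets lebesgue" "\<And>k. emeasure lebesgue (E k) = m k"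
    and T: "\<And>k. 0 < T k" "\<And>k. real k * T k \<le> s k"
    and large: "\<And>k. 1 < \<Phi> (T k) * m k"
    and nonneg: "\<And>t. 0 < t \<Longrightarrow> 0 \<le> \<Phi> t"
  shows "\<not> wOrlicz_admissible \<Phi> (\<lambda>x. \<Sum>k. s k * indicator (E k) x) b"
proof
  let ?v = "\<lambda>x. \<Sum>k. s k * indicator (E k) x"
  assume adm: "wOrlicz_admissible \<Phi> ?v b"
  hence b: "0 < b" by (simp add: wOrlicz_admissible_def)
  obtain k :: nat where k: "b < real k"
    using reals_Archimedean2 by blast
  have "b * T k < real k * T k"
    by (rule mult_strict_right_mono[OF k T(1)])
  hence "b * T k < s k"
    using T(2)[of k] by linarith
  hence sub: "E k \<subseteq> {x. \<bar>?v x\<bar> / b > T k}"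
    using suminf_cmult_indicator_real[OF E(1)] T(1) b by (auto simp: field_simps)
  have "(\<lambda>x. \<bar>?v x\<bar> / b) \<in> borel_measurable lebesgue"
    using borel_measurable_step_function[OF E(2), of s] by measurable
  from lebesgue_measurable_vimage_borel[OF this, of "{T k<..}"]
  have "{x. \<bar>?v x\<bar> / b > T k} \<in> sets lebesgue" by simp
  hence "ennreal (\<Phi> (T k)) * emeasure lebesgue (E k)
      \<le> ennreal (\<Phi> (T k)) * emeasure lebesgue {x. \<bar>?v x\<bar> / b > T k}"
    by (intro mult_left_mono emeasure_mono[OF sub]) auto
  also have "\<dots> \<le> 1"
    using adm T(1) by (simp add: wOrlicz_admissible_def)
  finally have "ennreal (\<Phi> (T k)) * ennreal (m k) \<le> 1"
    by (simp only: E(3))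
  moreover have "0 \<le> m k"
    using nonneg[OF T(1)] large[of k] by (smt (verit) mult_nonneg_nonpos)
  ultimately have "\<Phi> (T k) * m k \<le> 1"
    using nonneg[OF T(1)] by (simp flip: ennreal_mult)
  thus False
    using large[of k] by simp
qed

lemma young_function_mult_le_power_half:
  fixes k :: nat
  assumes Y: "young_function \<Psi>" and T: "0 < T" "\<Psi> ((real k + 1) * 2 ^ (k + 2) * T) < \<Phi> T"
    and t: "0 < t" "t < (real k + 1) * T"
  shows "\<Psi> t * (2 / \<Phi> T) \<le> (1/2) ^ Suc k"
proof -
  have "0 \<le> \<Psi> ((real k + 1) * 2 ^ (k + 2) * T)"
    using T(1) by (intro young_function_nonneg[OF Y]) simp
  hence \<Phi>_T: "0 < \<Phi> T"
    using T(2) by linarith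
  have "\<Psi> t \<le> \<Psi> ((real k + 1) * T)"
    using t by (intro young_function_mono[OF Y]) auto
  also have "(real k + 1) * T = (1 / 2 ^ (k + 2)) * ((real k + 1) * 2 ^ (k + 2) * T)"
    by simp
  also have "\<Psi> \<dots> \<le> (1 / 2 ^ (k + 2)) * \<Psi> ((real k + 1) * 2 ^ (k + 2) * T)"
    using T(1) one_le_power[of "2::real" "k + 2"]
    by (intro young_function_le_scaled[OF Y]) auto
  also have "\<dots> \<le> (1 / 2 ^ (k + 2)) * \<Phi> T"
    using T(2) by (intro mult_left_mono) auto
  finally have "\<Psi> t * (2 / \<Phi> T) \<le> (1 / 2 ^ (k + 2) * \<Phi> T) * (2 / \<Phi> T)"
    using \<Phi>_T by (intro mult_right_mono) auto
  also have "\<dots> = (1/2) ^ Suc k"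
    using \<Phi>_T by (simp add: power_add field_simps)
  finally show ?thesis .
qed

lemma dominated_if_wOrlicz_space_subset:
  fixes \<Phi>1 \<Phi>2 :: "real \<Rightarrow> real" and u :: "'a::euclidean_space \<Rightarrow> real"
  assumes Y1: "young_function \<Phi>1" and Y2: "young_function \<Phi>2"
    and u: "\<And>x. u x > 0" "u \<in> borel_measurable lebesgue"
    and subset: "wOrlicz_space \<Phi>2 u \<subseteq> wOrlicz_space \<Phi>1 u"
  shows "\<exists>C>0. \<forall>t>0. \<Phi>1 t \<le> \<Phi>2 (C * t)"
proof (rule ccontr)
  assume "\<not> (\<exists>C>0. \<forall>t>0. \<Phi>1 t \<le> \<Phi>2 (C * t))"
  hence "\<exists>t>0. \<Phi>2 ((real k + 1) * 2 ^ (k + 2) * t) < \<Phi>1 t" for k :: nat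
    by (simp add: not_le)
  then obtain T where T: "\<And>k. 0 < T k" "\<And>k. \<Phi>2 ((real k + 1) * 2 ^ (k + 2) * T k) < \<Phi>1 (T k)"
    by metis
  have \<Phi>1_T: "0 < \<Phi>1 (T k)" for k
    using T young_function_nonneg[OF Y2, of "(real k + 1) * 2 ^ (k + 2) * T k"]
    by (smt (verit) mult_pos_pos zero_less_power of_nat_0_le_iff)
  define m where "m k = 2 / \<Phi>1 (T k)" for k
  define s where "s k = (real k + 1) * T k" for k
  have m: "0 \<le> m k" for k
    using \<Phi>1_T[of k] by (simp add: m_def)
  obtain E :: "nat \<Rightarrow> 'a set" where E: "disjoint_family E" "\<And>k. E k \<in> sets lebesgue"
      "\<And>k. emeasure lebesgue (E k) = m k"
    using lebesgue_disjoint_family_with_measures[of m] m by blast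
  define v where "v x = (\<Sum>k. s k * indicator (E k) x)" for x
  define f where "f x = v x / u x" for x
  have uf: "(\<lambda>x. u x * f x) = v"
    using u(1) by (simp add: f_def fun_eq_iff less_imp_neq[symmetric])
  have small: "\<Phi>2 t * m k \<le> (1/2) ^ Suc k" if "0 < t" "t < s k" for t k
    using young_function_mult_le_power_half[where \<Phi> = \<Phi>1 and \<Psi> = \<Phi>2 and k = k and T = "T k", OF Y2 T(1) T(2)] that
    by (simp add: m_def s_def)
  have "f \<in> wOrlicz_space \<Phi>2 u"
  proof -
    have "wOrlicz_admissible \<Phi>2 (\<lambda>x. u x * f x) 1"
      unfolding uf v_def
      by (rule wOrlicz_admissible_step_function[OF E _ m _ small])
        (use T(1) young_function_nonneg[OF Y2] in \<open>auto simp: s_def less_imp_le\<close>)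
    hence "wOrlicz_norm \<Phi>2 u f \<le> ennreal 1"
      by (rule wOrlicz_norm_le_admissible)
    hence "wOrlicz_norm \<Phi>2 u f < \<infinity>"
      by (rule order.strict_trans1) simp
    moreover have "f \<in> borel_measurable lebesgue"
      unfolding f_def v_def using borel_measurable_step_function[OF E(2)] u(2) by measurable
    ultimately show ?thesis by (simp add: wOrlicz_space_def)
  qed
  moreover have "f \<notin> wOrlicz_space \<Phi>1 u"
  proof -
    have "\<not> wOrlicz_admissible \<Phi>1 (\<lambda>x. u x * f x) b" for b
      unfolding uf v_def
      by (rule not_wOrlicz_admissible_step_function[OF E, where T = T])
        (use T(1) \<Phi>1_T[THEN less_imp_neq] young_function_nonneg[OF Y1]
          in \<open>auto simp: s_def m_def\<close>)
    hence "wOrlicz_norm \<Phi>1 u f = \<infinity>"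
      using wOrlicz_norm_eq_top_iff by blast
    thus ?thesis by (simp add: wOrlicz_space_def)
  qed
  ultimately show False using subset by blast
qed

theorem theorem2p3:
  fixes \<Phi>1 \<Phi>2 :: "real \<Rightarrow> real" and u :: "'a::euclidean_space \<Rightarrow> real"
  assumes "young_function \<Phi>1" and "young_function \<Phi>2"
    and "\<And>x. u x > 0"
    and "u \<in> borel_measurable lebesgue"
  shows "((\<exists>C>0. \<forall>t>0. \<Phi>1 t \<le> \<Phi>2 (C * t))
            \<longleftrightarrow> wOrlicz_space \<Phi>2 u \<subseteq> wOrlicz_space \<Phi>1 u)
       \<and> (wOrlicz_space \<Phi>2 u \<subseteq> wOrlicz_space \<Phi>1 u
            \<longleftrightarrow> (\<exists>C>0. \<forall>f\<in>wOrlicz_space \<Phi>2 u.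
                   wOrlicz_norm \<Phi>1 u f \<le> ennreal C * wOrlicz_norm \<Phi>2 u f))"
proof -
  let ?dominated = "\<exists>C>0. \<forall>t>0. \<Phi>1 t \<le> \<Phi>2 (C * t)"
  let ?subset = "wOrlicz_space \<Phi>2 u \<subseteq> wOrlicz_space \<Phi>1 u"
  let ?norm_le = "\<exists>C>0. \<forall>f\<in>wOrlicz_space \<Phi>2 u.
                   wOrlicz_norm \<Phi>1 u f \<le> ennreal C * wOrlicz_norm \<Phi>2 u f"
  have "?dominated \<Longrightarrow> ?norm_le"
    using wOrlicz_norm_le_dominated by blast
  moreover have "?norm_le \<Longrightarrow> ?subset"
    by (auto simp: wOrlicz_space_def ennreal_mult_less_top intro: le_less_trans)
  moreover have "?subset \<Longrightarrow> ?dominated"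
    using dominated_if_wOrlicz_space_subset[OF assms] .
  ultimately show ?thesis by blast
qed

end
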